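(* Let $k\ge1$, work in $\mathbb{R}^{k+1}$ with standard basis $e_1,\dots,e_{k+1}$ (coordinates ordered as $(\mu_1,\dots,\mu_k,s)$), and for $i\ge1$ let \[ P_i=\mathrm{Conv}\Big(\{0\}\cup\{(i-2j)\,e_\ell+j\,e_{k+1}:\ \ell\in[k],\ 0\le j\le\lfloor i/2\rfloor\}\Big), \] the Newton polytope of $\sum_{\ell=1}^k\bar\lambda_\ell M_i(\mu_\ell,s)-\bar m_i$ for nonzero $\bar\lambda_\ell,\bar m_i$. Define line segments $Q_1=\mathrm{Conv}\{0,e_1\}$, $Q_2=\mathrm{Conv}\{0,e_{k+1}\}$, and $Q_i=\mathrm{Conv}\{0,\,i\,e_{i-1}\}$ for $3\le i\le k+1$. Then for every nonzero $w\in\mathbb{R}^{k+1}$ the set \[ \mathcal I_w=\{i\in[k+1]:\ Q_i\cap\mathrm{Init}_w(P_i)\neq\emptyset\} \] is nonempty.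
   Context: Define polynomials $M_i(\mu,s)$ for $i\ge 0$ by $M_0=1$, $M_1=\mu$, $M_i=\mu M_{i-1}+(i-1)\,s\,M_{i-2}$ for $i\ge2$. For $w\in\mathbb{R}^n$ and a convex polytope $P$, $\mathrm{Init}_w(P)=\{x\in P:\langle w,x\rangle\le\langle w,y\rangle\ \forall y\in P\}$ is the face where $\langle w,\cdot\rangle$ is minimized. *)

theory Defs
  imports Complex_Main
begin

text \<open>Points of R^(k+1) are represented as functions nat => real; coordinate j
  (0-based, j = 0..k) corresponds to the paper's basis vector e_(j+1).
  So e_l (l in [k]) is index l-1 and e_(k+1) (the s-coordinate) is index k.\<close>

definition ebasis :: "nat \<Rightarrow> nat \<Rightarrow> real" where
  "ebasis n = (\<lambda>j. if j = n then 1 else 0)"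

definition ipk :: "nat \<Rightarrow> (nat \<Rightarrow> real) \<Rightarrow> (nat \<Rightarrow> real) \<Rightarrow> real" where
  "ipk k w x = (\<Sum>j\<le>k. w j * x j)"

definition fconv :: "(nat \<Rightarrow> real) set \<Rightarrow> (nat \<Rightarrow> real) set" where
  "fconv S = {x. \<exists>F c. finite F \<and> F \<subseteq> S \<and> (\<forall>y\<in>F. 0 \<le> c y) \<and> sum c F = 1
                  \<and> x = (\<lambda>j. \<Sum>y\<in>F. c y * y j)}"

definition Init :: "nat \<Rightarrow> (nat \<Rightarrow> real) \<Rightarrow> (nat \<Rightarrow> real) set \<Rightarrow> (nat \<Rightarrow> real) set" where
  "Init k w P = {x \<in> P. \<forall>y\<in>P. ipk k w x \<le> ipk k w y}"

definition Ppoly :: "nat \<Rightarrow> nat \<Rightarrow> (nat \<Rightarrow> real) set" where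
  "Ppoly k i = fconv ({\<lambda>_. 0} \<union>
     {(\<lambda>t. (real i - 2 * real j) * ebasis (l - 1) t + real j * ebasis k t) | l j.
        l \<in> {1..k} \<and> j \<le> i div 2})"

definition Qseg :: "nat \<Rightarrow> nat \<Rightarrow> (nat \<Rightarrow> real) set" where
  "Qseg k i = (if i = 1 then fconv {\<lambda>_. 0, ebasis 0}
               else if i = 2 then fconv {\<lambda>_. 0, ebasis k}
               else fconv {\<lambda>_. 0, (\<lambda>t. real i * ebasis (i - 2) t)})"

end

theory Submission
  imports Defs
begin

text \<open>Let \<open>p\<close> be a coordinate among \<open>\<mu>\<^sub>1, \<dots>, \<mu>\<^sub>k\<close> on which \<open>w\<close> is smallest. If \<open>w\<^sub>p \<ge> 0\<close>, the
  origin minimises \<open>w\<close> on \<open>P\<^sub>1\<close>. Otherwise, if \<open>w\<^sub>s \<le> 2 w\<^sub>p\<close>, the vertex \<open>e\<^sub>k\<^sub>+\<^sub>1\<close> of \<open>P\<^sub>2\<close> is minimal;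
  if \<open>w\<^sub>s \<ge> 2 w\<^sub>p\<close>, trading two units of \<open>\<mu>\<^sub>l\<close> for one unit of \<open>s\<close> never lowers \<open>w\<close>, so the vertex
  \<open>i e\<^sub>p\<close> is minimal on every \<open>P\<^sub>i\<close>, in particular on the one whose segment \<open>Q\<^sub>i\<close> points along \<open>e\<^sub>p\<close>.
  In each case the minimiser is an endpoint of \<open>Q\<^sub>i\<close>.\<close>

lemma ipk_two_ebasis:
  assumes "p \<le> k" "q \<le> k" "p \<noteq> q"
  shows "ipk k w (\<lambda>t. a * ebasis p t + b * ebasis q t) = a * w p + b * w q"
proof -
  have "ipk k w (\<lambda>t. a * ebasis p t + b * ebasis q t)
      = (\<Sum>j\<le>k. if j = p then a * w p else 0) + (\<Sum>j\<le>k. if j = q then b * w q else 0)"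
    unfolding ipk_def ebasis_def
    by (subst sum.distrib[symmetric], rule sum.cong) (auto simp: algebra_simps)
  also have "\<dots> = a * w p + b * w q"
    using assms by simp
  finally show ?thesis .
qed

lemma ipk_zero [simp]: "ipk k w (\<lambda>_. 0) = 0"
  unfolding ipk_def by simp

lemma fconv_inc: "x \<in> S \<Longrightarrow> x \<in> fconv S"
  unfolding fconv_def by (auto intro!: exI[of _ "{x}"] exI[of _ "\<lambda>_. 1"])

lemma ipk_fconv_ge:
  assumes "y \<in> fconv S" "\<forall>s\<in>S. a \<le> ipk k w s"
  shows "a \<le> ipk k w y"
proof -
  obtain F c where F: "finite F" "F \<subseteq> S" "\<forall>v\<in>F. 0 \<le> c v" "sum c F = 1"
    and y: "y = (\<lambda>j. \<Sum>v\<in>F. c v * v j)"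
    using assms(1) unfolding fconv_def by blast
  have "ipk k w y = (\<Sum>v\<in>F. c v * ipk k w v)"
    unfolding ipk_def y by (simp add: sum_distrib_left algebra_simps sum.swap[of _ F])
  also have "\<dots> \<ge> (\<Sum>v\<in>F. c v * a)"
    using F assms(2) by (intro sum_mono mult_left_mono) auto
  moreover have "(\<Sum>v\<in>F. c v * a) = a"
    using F(4) by (simp add: sum_distrib_right[symmetric])
  ultimately show ?thesis by simp
qed

lemma Init_fconv_of_min:
  assumes "x \<in> S" "\<forall>y\<in>S. ipk k w x \<le> ipk k w y"
  shows "x \<in> Init k w (fconv S)"
  unfolding Init_def using assms fconv_inc ipk_fconv_ge by blast

text \<open>The generators of \<open>P\<^sub>i\<close>, with the \<open>\<mu>\<close>-index \<open>l\<close> now 0-based.\<close>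

definition Pgen :: "nat \<Rightarrow> nat \<Rightarrow> (nat \<Rightarrow> real) set" where
  "Pgen k i = insert (\<lambda>_. 0)
     {(\<lambda>t. (real i - 2 * real j) * ebasis l t + real j * ebasis k t) | l j. l < k \<and> j \<le> i div 2}"

lemma Ppoly_eq_fconv_Pgen: "Ppoly k i = fconv (Pgen k i)"
proof -
  have "{(\<lambda>t. (real i - 2 * real j) * ebasis (l - 1) t + real j * ebasis k t) | l j.
          l \<in> {1..k} \<and> j \<le> i div 2}
      = {(\<lambda>t. (real i - 2 * real j) * ebasis l t + real j * ebasis k t) | l j. l < k \<and> j \<le> i div 2}"
  proof (intro equalityI subsetI)
    fix x assume "x \<in> {(\<lambda>t. (real i - 2 * real j) * ebasis l t + real j * ebasis k t) | l j.
                        l < k \<and> j \<le> i div 2}"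
    then obtain l j where "l < k" "j \<le> i div 2"
      and "x = (\<lambda>t. (real i - 2 * real j) * ebasis (Suc l - 1) t + real j * ebasis k t)"
      by auto
    then show "x \<in> {(\<lambda>t. (real i - 2 * real j) * ebasis (l - 1) t + real j * ebasis k t) | l j.
                        l \<in> {1..k} \<and> j \<le> i div 2}"
      by (intro CollectI exI[of _ "Suc l"] exI[of _ j]) auto
  qed force
  then show ?thesis
    unfolding Ppoly_def Pgen_def by simp
qed

lemma Pgen_vertex:
  assumes "l < k" "2 * j \<le> i"
  shows "(\<lambda>t. (real i - 2 * real j) * ebasis l t + real j * ebasis k t) \<in> Pgen k i"
proof -
  have "j \<le> i div 2"
    using assms(2) by linarith
  then show ?thesis
    unfolding Pgen_def using assms(1) by blast
qed

lemma Init_Ppoly_of_min: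
  assumes "x \<in> Pgen k i" "ipk k w x \<le> 0"
    and "\<And>l j. l < k \<Longrightarrow> 2 * j \<le> i \<Longrightarrow> ipk k w x \<le> (real i - 2 * real j) * w l + real j * w k"
  shows "x \<in> Init k w (Ppoly k i)"
  unfolding Ppoly_eq_fconv_Pgen
proof (rule Init_fconv_of_min[OF assms(1)])
  show "\<forall>y\<in>Pgen k i. ipk k w x \<le> ipk k w y"
    using assms(2,3) by (auto simp: Pgen_def ipk_two_ebasis)
qed

lemma origin_in_Init_Ppoly_1:
  assumes "\<And>l. l < k \<Longrightarrow> 0 \<le> w l"
  shows "(\<lambda>_. 0) \<in> Init k w (Ppoly k 1)"
proof (rule Init_Ppoly_of_min)
  fix l j assume "l < k" "2 * j \<le> (1::nat)"
  moreover from this have "j = 0" by simp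
  ultimately show "ipk k w (\<lambda>_. 0) \<le> (real 1 - 2 * real j) * w l + real j * w k"
    using assms by simp
qed (simp_all add: Pgen_def)

lemma ebasis_in_Init_Ppoly_2:
  assumes "k \<ge> 1" "w k \<le> 0" "\<And>l. l < k \<Longrightarrow> w k \<le> 2 * w l"
  shows "ebasis k \<in> Init k w (Ppoly k 2)"
proof (rule Init_Ppoly_of_min)
  have "ebasis k = (\<lambda>t. (real 2 - 2 * real 1) * ebasis 0 t + real 1 * ebasis k t)"
    by simp
  then show "ebasis k \<in> Pgen k 2"
    using Pgen_vertex[of 0 k 1 2] assms(1) by simp
  have ipk_ebasis: "ipk k w (ebasis k) = w k"
    using ipk_two_ebasis[of 0 k k w 0 1] assms(1) by simp
  show "ipk k w (ebasis k) \<le> 0"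
    using assms(2) ipk_ebasis by simp
  fix l j assume "l < k" "2 * j \<le> (2::nat)"
  then have "j = 0 \<or> j = 1" by auto
  then show "ipk k w (ebasis k) \<le> (real 2 - 2 * real j) * w l + real j * w k"
    using assms(3)[OF \<open>l < k\<close>] ipk_ebasis by auto
qed

lemma scaled_ebasis_in_Init_Ppoly:
  assumes "p < k" "w p \<le> 0" "\<And>l. l < k \<Longrightarrow> w p \<le> w l" "2 * w p \<le> w k"
  shows "(\<lambda>t. real i * ebasis p t) \<in> Init k w (Ppoly k i)"
proof (rule Init_Ppoly_of_min)
  have "(\<lambda>t. real i * ebasis p t) = (\<lambda>t. (real i - 2 * real 0) * ebasis p t + real 0 * ebasis k t)"
    by simp
  then show "(\<lambda>t. real i * ebasis p t) \<in> Pgen k i"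
    using Pgen_vertex[of p k 0 i] assms(1) by simp
  have ipk_x: "ipk k w (\<lambda>t. real i * ebasis p t) = real i * w p"
    using ipk_two_ebasis[of p k k w "real i" 0] assms(1) by simp
  show "ipk k w (\<lambda>t. real i * ebasis p t) \<le> 0"
    using assms(2) ipk_x by (simp add: mult_nonneg_nonpos)
  fix l j assume l: "l < k" and j: "2 * j \<le> i"
  have "(real i - 2 * real j) * w p \<le> (real i - 2 * real j) * w l"
    using j assms(3)[OF l] by (intro mult_left_mono) auto
  moreover have "real j * (2 * w p) \<le> real j * w k"
    using assms(4) by (intro mult_left_mono) auto
  ultimately show "ipk k w (\<lambda>t. real i * ebasis p t) \<le> (real i - 2 * real j) * w l + real j * w k"
    using ipk_x by (simp add: algebra_simps)
qed

lemma origin_in_Qseg: "(\<lambda>_. 0) \<in> Qseg k i"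
  unfolding Qseg_def by (auto intro: fconv_inc)

lemma ebasis_in_Qseg_2: "ebasis k \<in> Qseg k 2"
  unfolding Qseg_def by (auto intro: fconv_inc)

lemma scaled_ebasis_in_Qseg:
  assumes "p < k"
  shows "\<exists>i\<in>{1..k+1}. (\<lambda>t. real i * ebasis p t) \<in> Qseg k i"
proof (cases "p = 0")
  case True
  then show ?thesis
    using assms by (intro bexI[of _ 1]) (auto simp: Qseg_def intro: fconv_inc)
next
  case False
  then show ?thesis
    using assms by (intro bexI[of _ "p + 2"]) (auto simp: Qseg_def intro: fconv_inc)
qed

theorem mainTheorem8:
  fixes k :: nat and w :: "nat \<Rightarrow> real"
  assumes "k \<ge> 1"
    and "\<exists>j\<le>k. w j \<noteq> 0"
  shows "{i \<in> {1..k+1}. Qseg k i \<inter> Init k w (Ppoly k i) \<noteq> {}} \<noteq> {}"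
proof -
  obtain p where p: "p < k" and p_min: "\<And>l. l < k \<Longrightarrow> w p \<le> w l"
    using ex_min_if_finite[of "w ` {..<k}"] assms(1) by (fastforce simp: not_less)
  consider "0 \<le> w p" | "w p < 0" "w k \<le> 2 * w p" | "w p < 0" "2 * w p \<le> w k"
    by linarith
  then have "\<exists>i\<in>{1..k+1}. \<exists>x. x \<in> Qseg k i \<and> x \<in> Init k w (Ppoly k i)"
  proof cases
    case 1
    then have "\<And>l. l < k \<Longrightarrow> 0 \<le> w l"
      using p_min by (meson order_trans)
    then show ?thesis
      using origin_in_Qseg origin_in_Init_Ppoly_1 by (intro bexI[of _ 1] exI[of _ "\<lambda>_. 0"] conjI) auto
  next
    case 2
    then have "\<And>l. l < k \<Longrightarrow> w k \<le> 2 * w l"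
      using p_min by force
    then show ?thesis
      using 2 assms(1) ebasis_in_Qseg_2 ebasis_in_Init_Ppoly_2
      by (intro bexI[of _ 2] exI[of _ "ebasis k"] conjI) auto
  next
    case 3
    then show ?thesis
      using scaled_ebasis_in_Qseg[OF p] scaled_ebasis_in_Init_Ppoly[OF p] p_min by fastforce
  qed
  then show ?thesis
    by blast
qed

end
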